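(* Let $\mathcal{B}$ be a real uniform Banach space, $x_1,\dots,x_m\in\mathcal{B}$, and $Z=\{g\in\mathcal{B}: [g,x_i]=0\ \forall i=1,\dots,m\}$. Then for every $f_0\in\mathcal{B}$ there exists $g\in Z$ such that $(f_0+g)^*\in\operatorname{span}\{x_1^*,\dots,x_m^*\}$ and $\|f_0+g\|\le\|f_0\|$. (Note that $f_0+g$ satisfies $[f_0+g,x_i]=[f_0,x_i]$ for all $i$.)
   Context: A real Banach space $\mathcal{B}$ is called uniform if it is uniformly convex and uniformly smooth (equivalently, its norm is uniformly Fréchet differentiable). On such a space there is a unique semi-inner product inducing the norm, i.e. a unique map $[\cdot,\cdot]:\mathcal{B}\times\mathcal{B}\to\mathbb{R}$ that is linear in the first argument, satisfies $[x,x]=\|x\|^2$, $|[x,y]|^2\le[x,x][y,y]$ and $[x,\lambda y]=\lambda[x,y]$ for $\lambda\in\mathbb{R}$; it is given by $[y,x]=\|x\|\lim_{t\to0}\frac{\|x+ty\|-\|x\|}{t}$ for $x\neq0$ (and $[y,0]=0$). The duality map $x\mapsto x^*\in\mathcal{B}^*$ is defined by $x^*(y)=[y,x]$; it is an isometric bijection $\mathcal{B}\to\mathcal{B}^*$. *)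

theory Defs
  imports "HOL-Analysis.Analysis"
begin

definition uniformly_convex :: "'a::real_normed_vector itself \<Rightarrow> bool" where
  "uniformly_convex _ \<longleftrightarrow>
     (\<forall>\<epsilon>>0. \<exists>\<delta>>0. \<forall>x y::'a. norm x \<le> 1 \<and> norm y \<le> 1 \<and> norm (x - y) \<ge> \<epsilon>
        \<longrightarrow> norm ((x + y) /\<^sub>R 2) \<le> 1 - \<delta>)"

text \<open>Uniform smoothness: the modulus of smoothness rho(t) satisfies rho(t)/t -> 0 as t -> 0+.\<close>
definition uniformly_smooth :: "'a::real_normed_vector itself \<Rightarrow> bool" where
  "uniformly_smooth _ \<longleftrightarrow>
     (\<forall>\<epsilon>>0. \<exists>\<delta>>0. \<forall>x y::'a. \<forall>t::real. norm x = 1 \<and> norm y = 1 \<and> 0 < t \<and> t < \<delta>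
        \<longrightarrow> norm (x + t *\<^sub>R y) + norm (x - t *\<^sub>R y) - 2 \<le> \<epsilon> * t)"

definition uniform_banach :: "'a::banach itself \<Rightarrow> bool" where
  "uniform_banach T \<longleftrightarrow> uniformly_convex T \<and> uniformly_smooth T"

definition sip :: "'a::real_normed_vector \<Rightarrow> 'a \<Rightarrow> real" where
  "sip y x = (if x = 0 then 0
              else norm x * Lim (at (0::real)) (\<lambda>t. (norm (x + t *\<^sub>R y) - norm x) / t))"

definition dual_map :: "'a::real_normed_vector \<Rightarrow> 'a \<Rightarrow> real" where
  "dual_map x = (\<lambda>y. sip y x)"

end

theory Submission
  imports Defs
begin

text \<open>Uniform smoothness makes the norm Gateaux differentiable away from \<open>0\<close>, so each
  \<open>[\<cdot>, x]\<close> is a bounded linear functional and the affine set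
  \<open>f\<^sub>0 + Z = {h. [h, x\<^sub>i] = [f\<^sub>0, x\<^sub>i] for all i}\<close> is closed and convex. Uniform convexity makes
  minimizing sequences for the norm on such a set Cauchy, so the norm attains its minimum at
  some \<open>h = f\<^sub>0 + g\<close>, and \<open>\<parallel>h\<parallel> \<le> \<parallel>f\<^sub>0\<parallel>\<close>. Along every line \<open>h + t z\<close> with \<open>z \<in> Z\<close> the norm is
  minimal at \<open>t = 0\<close>, so its derivative \<open>[z, h]\<close> vanishes: \<open>h\<^sup>*\<close> annihilates the common kernel
  of the \<open>x\<^sub>i\<^sup>*\<close> and therefore lies in their span.\<close>

definition norm_slope :: "'a::real_normed_vector \<Rightarrow> 'a \<Rightarrow> real \<Rightarrow> real" where
  "norm_slope x y t = (norm (x + t *\<^sub>R y) - norm x) / t"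

definition norm_dir_deriv :: "'a::real_normed_vector \<Rightarrow> 'a \<Rightarrow> real" where
  "norm_dir_deriv x y = Lim (at (0::real)) (norm_slope x y)"

lemma sip_eq_norm_mult_dir_deriv: "x \<noteq> 0 \<Longrightarrow> sip y x = norm x * norm_dir_deriv x y"
  unfolding sip_def norm_dir_deriv_def norm_slope_def by simp

lemma norm_slope_left_le_right:
  fixes x y :: "'a::real_normed_vector"
  assumes "a < 0" "0 < b"
  shows "norm_slope x y a \<le> norm_slope x y b"
proof -
  have split: "(b - a) *\<^sub>R x = b *\<^sub>R (x + a *\<^sub>R y) + (-a) *\<^sub>R (x + b *\<^sub>R y)"
    by (simp add: algebra_simps)
  have "(b - a) * norm x = norm ((b - a) *\<^sub>R x)" using assms by simp
  also have "\<dots> \<le> b * norm (x + a *\<^sub>R y) + (-a) * norm (x + b *\<^sub>R y)"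
    unfolding split using assms
    by (metis abs_of_nonneg abs_of_pos less_eq_real_def neg_0_less_iff_less norm_scaleR norm_triangle_ineq)
  finally show ?thesis
    unfolding norm_slope_def using assms
    by (simp add: divide_simps) (smt (verit) mult.commute right_diff_distrib)
qed

lemma uniformly_smooth_scaled:
  fixes x y :: "'a::real_normed_vector"
  assumes smooth: "uniformly_smooth TYPE('a)" and "x \<noteq> 0" and "e > 0"
  shows "\<exists>d>0. \<forall>t. 0 < t \<and> t < d \<longrightarrow> norm (x + t *\<^sub>R y) + norm (x - t *\<^sub>R y) - 2 * norm x \<le> e * t"
proof (cases "y = 0")
  case True
  then show ?thesis using \<open>e > 0\<close> by (intro exI[of _ 1]) auto
next
  case False
  define n k where "n = norm x" and "k = norm y"
  have n: "n > 0" and k: "k > 0" using \<open>x \<noteq> 0\<close> False by (auto simp: n_def k_def)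
  have "e / k > 0" using \<open>e > 0\<close> k by simp
  from smooth[unfolded uniformly_smooth_def, rule_format, OF this]
  obtain d where d: "d > 0" and D: "\<forall>(u::'a) v s. norm u = 1 \<and> norm v = 1 \<and> 0 < s \<and> s < d
        \<longrightarrow> norm (u + s *\<^sub>R v) + norm (u - s *\<^sub>R v) - 2 \<le> (e / k) * s"
    by blast
  show ?thesis
  proof (intro exI[of _ "d * n / k"] conjI allI impI)
    show "d * n / k > 0" using d n k by simp
    fix t assume t: "0 < t \<and> t < d * n / k"
    define u v s where "u = x /\<^sub>R n" and "v = y /\<^sub>R k" and "s = t * k / n"
    have "norm u = 1" "norm v = 1" using n k by (auto simp: u_def v_def n_def k_def)
    moreover have "0 < s" "s < d" using t n k by (auto simp: s_def field_simps)
    ultimately have "norm (u + s *\<^sub>R v) + norm (u - s *\<^sub>R v) - 2 \<le> (e / k) * s"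
      using D by blast
    then have "n * (norm (u + s *\<^sub>R v) + norm (u - s *\<^sub>R v) - 2) \<le> n * ((e / k) * s)"
      using n by (intro mult_left_mono) auto
    also have "n * ((e / k) * s) = e * t" using n k by (simp add: s_def field_simps)
    finally have scaled: "n * (norm (u + s *\<^sub>R v) + norm (u - s *\<^sub>R v) - 2) \<le> e * t" .
    have rescale: "x + t *\<^sub>R y = n *\<^sub>R (u + s *\<^sub>R v)" "x - t *\<^sub>R y = n *\<^sub>R (u - s *\<^sub>R v)"
      using n k by (auto simp: u_def v_def s_def algebra_simps)
    show "norm (x + t *\<^sub>R y) + norm (x - t *\<^sub>R y) - 2 * norm x \<le> e * t"
      unfolding rescale norm_scaleR using scaled n by (simp add: n_def[symmetric] algebra_simps)
  qed
qed

text \<open>The slopes from the left are bounded by those from the right, and uniform smoothness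
  squeezes the gap between the slopes at \<open>-t\<close> and \<open>t\<close> to zero; so the infimum of the right
  slopes is the two-sided limit.\<close>
lemma norm_slope_converges:
  fixes x y :: "'a::real_normed_vector"
  assumes smooth: "uniformly_smooth TYPE('a)" and x: "x \<noteq> 0"
  shows "\<exists>L. (norm_slope x y \<longlongrightarrow> L) (at 0)"
proof -
  define L where "L = Inf (norm_slope x y ` {0<..})"
  have bdd: "bdd_below (norm_slope x y ` {0<..})"
    by (rule bdd_belowI[of _ "norm_slope x y (-1)"]) (auto intro: norm_slope_left_le_right)
  have right: "L \<le> norm_slope x y t" if "t > 0" for t
    unfolding L_def using bdd that by (auto intro: cInf_lower)
  have left: "norm_slope x y (-t) \<le> L" if "t > 0" for t
    unfolding L_def using that by (intro cInf_greatest) (auto intro: norm_slope_left_le_right)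
  have gap: "norm_slope x y t - norm_slope x y (-t)
      = (norm (x + t *\<^sub>R y) + norm (x - t *\<^sub>R y) - 2 * norm x) / t" if "t > 0" for t
    using that by (simp add: norm_slope_def field_simps)
  have "(norm_slope x y \<longlongrightarrow> L) (at 0)"
    unfolding LIM_eq
  proof (intro allI impI)
    fix r :: real assume r: "r > 0"
    obtain d where d: "d > 0" and D: "\<And>t. 0 < t \<and> t < d \<Longrightarrow>
       norm (x + t *\<^sub>R y) + norm (x - t *\<^sub>R y) - 2 * norm x \<le> (r/2) * t"
      using uniformly_smooth_scaled[OF smooth x, of "r/2" y] r by auto
    have small_gap: "norm_slope x y t - norm_slope x y (-t) < r" if "0 < t" "t < d" for t
    proof -
      have "norm_slope x y t - norm_slope x y (-t) \<le> (r/2) * t / t"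
        unfolding gap[OF that(1)] using D that by (intro divide_right_mono) auto
      also have "\<dots> < r" using that r by simp
      finally show ?thesis .
    qed
    have "norm (norm_slope x y t - L) < r" if "t \<noteq> 0" "\<bar>t\<bar> < d" for t
    proof (cases "t > 0")
      case True
      then show ?thesis using right[of t] left[of t] small_gap[of t] that by auto
    next
      case False
      then have "-t > 0" "-t < d" using that by auto
      then show ?thesis using right[of "-t"] left[of "-t"] small_gap[of "-t"] by auto
    qed
    then show "\<exists>s>0. \<forall>t. t \<noteq> 0 \<and> norm (t - 0) < s \<longrightarrow> norm (norm_slope x y t - L) < r"
      using d by auto
  qed
  then show ?thesis by blast
qed

lemma norm_slope_tendsto:
  fixes x y :: "'a::real_normed_vector"
  assumes "uniformly_smooth TYPE('a)" and "x \<noteq> 0"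
  shows "(norm_slope x y \<longlongrightarrow> norm_dir_deriv x y) (at 0)"
  using norm_slope_converges[OF assms, of y] unfolding norm_dir_deriv_def
  by (metis tendsto_Lim trivial_limit_at)

lemma tendsto_at_0_compose_scale:
  fixes f :: "real \<Rightarrow> real"
  assumes "(f \<longlongrightarrow> L) (at 0)" "c \<noteq> 0"
  shows "((\<lambda>t. f (c * t)) \<longlongrightarrow> L) (at 0)"
proof -
  have "filterlim (\<lambda>t. c * t) (at 0) (at (0::real))"
  proof (rule filterlim_atI)
    show "((*) c \<longlongrightarrow> 0) (at 0)" by (auto intro!: tendsto_eq_intros)
    show "\<forall>\<^sub>F t in at 0. c * t \<noteq> 0" using assms(2) by (auto simp: eventually_at_filter)
  qed
  then show ?thesis using assms(1) by (rule filterlim_compose[rotated])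
qed

lemma norm_dir_deriv_scaleR:
  fixes x y :: "'a::real_normed_vector"
  assumes smooth: "uniformly_smooth TYPE('a)" and x: "x \<noteq> 0"
  shows "norm_dir_deriv x (c *\<^sub>R y) = c * norm_dir_deriv x y"
proof (cases "c = 0")
  case True
  have "norm_slope x 0 = (\<lambda>_. 0)" by (simp add: norm_slope_def fun_eq_iff)
  then have "(norm_slope x 0 \<longlongrightarrow> 0) (at 0)" by simp
  with norm_slope_tendsto[OF smooth x, of 0] True show ?thesis
    using tendsto_unique[OF trivial_limit_at] by simp
next
  case False
  have "((\<lambda>t. c * norm_slope x y (c * t)) \<longlongrightarrow> c * norm_dir_deriv x y) (at 0)"
    by (intro tendsto_mult tendsto_const tendsto_at_0_compose_scale norm_slope_tendsto smooth x False)
  moreover have "c * norm_slope x y (c * t) = norm_slope x (c *\<^sub>R y) t" if "t \<noteq> 0" for t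
    using that False by (simp add: norm_slope_def field_simps)
  then have "\<forall>\<^sub>F t in at 0. c * norm_slope x y (c * t) = norm_slope x (c *\<^sub>R y) t"
    by (auto simp: eventually_at_filter)
  ultimately have "(norm_slope x (c *\<^sub>R y) \<longlongrightarrow> c * norm_dir_deriv x y) (at 0)"
    by (rule Lim_transform_eventually)
  with norm_slope_tendsto[OF smooth x, of "c *\<^sub>R y"] show ?thesis
    using tendsto_unique[OF trivial_limit_at] by blast
qed

text \<open>By convexity of the norm, the slope in direction \<open>y + z\<close> at \<open>t\<close> is at most the sum of the
  slopes in directions \<open>y\<close> and \<open>z\<close> at \<open>2 t\<close>.\<close>
lemma norm_dir_deriv_add_le:
  fixes x y z :: "'a::real_normed_vector"
  assumes smooth: "uniformly_smooth TYPE('a)" and x: "x \<noteq> 0"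
  shows "norm_dir_deriv x (y + z) \<le> norm_dir_deriv x y + norm_dir_deriv x z"
proof -
  have le: "norm_slope x (y + z) t \<le> norm_slope x y (2 * t) + norm_slope x z (2 * t)" if "t > 0" for t
  proof -
    have midpoint: "x + t *\<^sub>R (y + z) = (1/2) *\<^sub>R (x + (2 * t) *\<^sub>R y) + (1/2) *\<^sub>R (x + (2 * t) *\<^sub>R z)"
      by (simp add: algebra_simps) (metis field_sum_of_halves scaleR_left_distrib scaleR_one)
    have "norm (x + t *\<^sub>R (y + z))
        \<le> (1/2) * norm (x + (2 * t) *\<^sub>R y) + (1/2) * norm (x + (2 * t) *\<^sub>R z)"
      unfolding midpoint by (rule order.trans[OF norm_triangle_ineq]) simp
    then have "(norm (x + t *\<^sub>R (y + z)) - norm x) / t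
        \<le> ((1/2) * norm (x + (2 * t) *\<^sub>R y) + (1/2) * norm (x + (2 * t) *\<^sub>R z) - norm x) / t"
      using that by (intro divide_right_mono) auto
    also have "\<dots> = norm_slope x y (2 * t) + norm_slope x z (2 * t)"
      using that unfolding norm_slope_def by (simp add: field_simps)
    finally show ?thesis unfolding norm_slope_def .
  qed
  have "((\<lambda>t. norm_slope x y (2 * t) + norm_slope x z (2 * t))
      \<longlongrightarrow> norm_dir_deriv x y + norm_dir_deriv x z) (at 0)"
    by (intro tendsto_add tendsto_at_0_compose_scale norm_slope_tendsto smooth x) auto
  then have "((\<lambda>t. norm_slope x y (2 * t) + norm_slope x z (2 * t))
      \<longlongrightarrow> norm_dir_deriv x y + norm_dir_deriv x z) (at_right 0)"
    by (rule tendsto_within_subset) simp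
  moreover have "(norm_slope x (y + z) \<longlongrightarrow> norm_dir_deriv x (y + z)) (at_right 0)"
    by (rule tendsto_within_subset[OF norm_slope_tendsto[OF smooth x]]) simp
  moreover have "\<forall>\<^sub>F t in at_right 0. norm_slope x (y + z) t \<le> norm_slope x y (2 * t) + norm_slope x z (2 * t)"
    using le by (auto simp: eventually_at_filter)
  ultimately show ?thesis by (rule tendsto_le[rotated]) simp
qed

lemma abs_norm_dir_deriv_le:
  fixes x y :: "'a::real_normed_vector"
  assumes smooth: "uniformly_smooth TYPE('a)" and x: "x \<noteq> 0"
  shows "\<bar>norm_dir_deriv x y\<bar> \<le> norm y"
proof -
  have "\<bar>norm_slope x y t\<bar> \<le> norm y" if "t \<noteq> 0" for t
  proof -
    have "\<bar>norm (x + t *\<^sub>R y) - norm x\<bar> \<le> norm (t *\<^sub>R y)"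
      by (metis add_diff_cancel_left' norm_triangle_ineq3)
    then show ?thesis using that unfolding norm_slope_def by (simp add: abs_divide divide_le_eq mult.commute)
  qed
  then have "\<forall>\<^sub>F t in at 0. norm (norm_slope x y t) \<le> norm y" by (auto simp: eventually_at_filter)
  from tendsto_upperbound[OF tendsto_norm[OF norm_slope_tendsto[OF smooth x]] this] show ?thesis by simp
qed

lemma bounded_linear_sip:
  fixes x :: "'a::real_normed_vector"
  assumes smooth: "uniformly_smooth TYPE('a)"
  shows "bounded_linear (\<lambda>y. sip y x)"
proof (cases "x = 0")
  case True
  then show ?thesis by (simp add: sip_def)
next
  case False
  note scale = norm_dir_deriv_scaleR[OF smooth False] and sub = norm_dir_deriv_add_le[OF smooth False]
  have add: "norm_dir_deriv x (y + z) = norm_dir_deriv x y + norm_dir_deriv x z" for y z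
  proof -
    have "- norm_dir_deriv x (y + z) = norm_dir_deriv x (-y + -z)"
      using scale[of "-1" "y + z"] by simp
    also have "\<dots> \<le> norm_dir_deriv x (-y) + norm_dir_deriv x (-z)" by (rule sub)
    also have "\<dots> = - norm_dir_deriv x y - norm_dir_deriv x z"
      using scale[of "-1" y] scale[of "-1" z] by simp
    finally show ?thesis using sub[of y z] by linarith
  qed
  show ?thesis
  proof (rule bounded_linear_intro[of _ "norm x"])
    show "sip (y + z) x = sip y x + sip z x" for y z
      using False by (simp add: sip_eq_norm_mult_dir_deriv add algebra_simps)
    show "sip (r *\<^sub>R y) x = r *\<^sub>R sip y x" for r y
      using False by (simp add: sip_eq_norm_mult_dir_deriv scale)
    show "norm (sip y x) \<le> norm y * norm x" for y
      using False abs_norm_dir_deriv_le[OF smooth False, of y]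
      by (simp add: sip_eq_norm_mult_dir_deriv abs_mult mult.commute mult_left_mono)
  qed
qed

lemma sip_eq_0_at_norm_minimum:
  fixes h z :: "'a::real_normed_vector"
  assumes smooth: "uniformly_smooth TYPE('a)" and min: "\<And>t. norm h \<le> norm (h + t *\<^sub>R z)"
  shows "sip z h = 0"
proof (cases "h = 0")
  case True
  then show ?thesis by (simp add: sip_def)
next
  case False
  have lim: "(norm_slope h z \<longlongrightarrow> norm_dir_deriv h z) (at 0)"
    by (rule norm_slope_tendsto[OF smooth False])
  have "0 \<le> norm_dir_deriv h z"
  proof (rule tendsto_lowerbound[OF tendsto_within_subset[OF lim]])
    show "\<forall>\<^sub>F t in at_right 0. 0 \<le> norm_slope h z t"
      using min by (auto simp: eventually_at_filter norm_slope_def)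
  qed auto
  moreover have "norm_dir_deriv h z \<le> 0"
  proof (rule tendsto_upperbound[OF tendsto_within_subset[OF lim]])
    show "\<forall>\<^sub>F t in at_left 0. norm_slope h z t \<le> 0"
      using min by (auto simp: eventually_at_filter norm_slope_def divide_nonneg_neg)
  qed auto
  ultimately show ?thesis using False by (simp add: sip_eq_norm_mult_dir_deriv)
qed


lemma linear_combination_if_common_kernel_subset:
  fixes \<phi> :: "'a::real_vector \<Rightarrow> real" and \<psi> :: "nat \<Rightarrow> 'a \<Rightarrow> real"
  assumes "linear \<phi>" and "\<And>i. i < m \<Longrightarrow> linear (\<psi> i)"
    and "\<And>y. \<forall>i<m. \<psi> i y = 0 \<Longrightarrow> \<phi> y = 0"
  shows "\<exists>c. \<phi> = (\<lambda>y. \<Sum>i<m. c i * \<psi> i y)"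
  using assms
proof (induction m arbitrary: \<phi>)
  case 0
  then show ?case by auto
next
  case (Suc m)
  interpret \<phi>: linear \<phi> by (fact Suc.prems(1))
  interpret \<psi>m: linear "\<psi> m" using Suc.prems(2) by simp
  show ?case
  proof (cases "\<exists>y0. (\<forall>i<m. \<psi> i y0 = 0) \<and> \<psi> m y0 \<noteq> 0")
    case True
    then obtain y0 where y0: "\<forall>i<m. \<psi> i y0 = 0" "\<psi> m y0 \<noteq> 0" by blast
    define y1 where "y1 = y0 /\<^sub>R \<psi> m y0"
    have y1: "\<forall>i<m. \<psi> i y1 = 0" "\<psi> m y1 = 1"
      using y0 Suc.prems(2) by (auto simp: y1_def linear_scale)
    define \<phi>' where "\<phi>' y = \<phi> y - \<phi> y1 * \<psi> m y" for y
    have "linear \<phi>'"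
      by (rule linearI) (simp_all add: \<phi>'_def \<phi>.add \<phi>.scale \<psi>m.add \<psi>m.scale algebra_simps)
    moreover have "\<phi>' y = 0" if "\<forall>i<m. \<psi> i y = 0" for y
    proof -
      have "\<forall>i<Suc m. \<psi> i (y - \<psi> m y *\<^sub>R y1) = 0"
        using that y1 Suc.prems(2) by (auto simp: linear_diff linear_scale less_Suc_eq)
      then have "\<phi> (y - \<psi> m y *\<^sub>R y1) = 0" by (rule Suc.prems(3))
      then show "\<phi>' y = 0" by (simp add: \<phi>'_def \<phi>.diff \<phi>.scale)
    qed
    ultimately obtain c where c: "\<phi>' = (\<lambda>y. \<Sum>i<m. c i * \<psi> i y)"
      using Suc.IH[of \<phi>'] Suc.prems(2) by fastforce
    have "\<phi> y = (\<Sum>i<Suc m. (c(m := \<phi> y1)) i * \<psi> i y)" for y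
      using fun_cong[OF c, of y] by (simp add: \<phi>'_def)
    then show ?thesis by blast
  next
    case False
    then obtain c where c: "\<phi> = (\<lambda>y. \<Sum>i<m. c i * \<psi> i y)"
      using Suc.IH[of \<phi>] Suc.prems by (metis less_Suc_eq)
    have "\<phi> y = (\<Sum>i<Suc m. (c(m := 0)) i * \<psi> i y)" for y
      by (simp add: c)
    then show ?thesis by blast
  qed
qed

lemma closed_convex_bounded_linear_level_set:
  assumes "\<And>i. i \<in> I \<Longrightarrow> bounded_linear (f i)"
  shows "closed {h. \<forall>i\<in>I. f i h = c i}" and "convex {h. \<forall>i\<in>I. f i h = c i}"
proof -
  have "{h. \<forall>i\<in>I. f i h = c i} = (\<Inter>i\<in>I. f i -` {c i})" by auto
  moreover have "closed (f i -` {c i})" if "i \<in> I" for i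
    using assms[OF that] by (intro closed_vimage closed_singleton) (rule linear_continuous_on)
  ultimately show "closed {h. \<forall>i\<in>I. f i h = c i}" by auto
  have "f i (a *\<^sub>R h + b *\<^sub>R k) = a *\<^sub>R f i h + b *\<^sub>R f i k" if "i \<in> I" for i a b h k
    using bounded_linear.linear[OF assms[OF that]] by (simp add: linear_add linear_scale)
  then show "convex {h. \<forall>i\<in>I. f i h = c i}"
    by (auto simp: convex_def simp flip: scaleR_add_left)
qed

lemma uniformly_convex_scaled:
  fixes e :: real
  assumes convex: "uniformly_convex TYPE('a::real_normed_vector)" and "e > 0"
  shows "\<exists>\<delta>. 0 < \<delta> \<and> \<delta> \<le> 1 \<and> (\<forall>R>0. \<forall>a b::'a. norm a \<le> R \<and> norm b \<le> R \<and> e * R \<le> norm (a - b)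
           \<longrightarrow> norm ((a + b) /\<^sub>R 2) \<le> (1 - \<delta>) * R)"
proof -
  obtain \<delta> where "\<delta> > 0" and \<delta>: "\<forall>a b::'a. norm a \<le> 1 \<and> norm b \<le> 1 \<and> e \<le> norm (a - b)
      \<longrightarrow> norm ((a + b) /\<^sub>R 2) \<le> 1 - \<delta>"
    using convex \<open>e > 0\<close> unfolding uniformly_convex_def by blast
  have "norm ((a + b) /\<^sub>R 2) \<le> (1 - min \<delta> 1) * R"
    if R: "R > 0" and ab: "norm a \<le> R" "norm b \<le> R" "e * R \<le> norm (a - b)" for R and a b :: 'a
  proof -
    have nR: "norm (w /\<^sub>R R) = norm w / R" for w :: 'a using R by (simp add: field_simps)
    have "norm (a /\<^sub>R R) \<le> 1" "norm (b /\<^sub>R R) \<le> 1"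
      using ab R by (simp_all only: nR divide_le_eq_1_pos)
    moreover have "e \<le> norm (a /\<^sub>R R - b /\<^sub>R R)"
      using ab R by (simp only: nR flip: scaleR_diff_right) (simp add: pos_le_divide_eq)
    ultimately have "norm ((a /\<^sub>R R + b /\<^sub>R R) /\<^sub>R 2) \<le> 1 - \<delta>" using \<delta> by blast
    also have "\<dots> \<le> 1 - min \<delta> 1" by simp
    also have "(a /\<^sub>R R + b /\<^sub>R R) /\<^sub>R 2 = ((a + b) /\<^sub>R 2) /\<^sub>R R" by (simp add: algebra_simps)
    finally have "norm ((a + b) /\<^sub>R 2) / R \<le> 1 - min \<delta> 1" by (simp only: nR)
    then show ?thesis using R by (simp add: pos_divide_le_eq)
  qed
  then show ?thesis using \<open>\<delta> > 0\<close> by (intro exI[of _ "min \<delta> 1"]) auto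
qed

text \<open>If two points of a minimizing sequence were \<open>e\<close> apart, their midpoint, which lies in \<open>C\<close>,
  would have norm noticeably below the infimum \<open>d\<close>.\<close>
lemma uniformly_convex_minimizing_sequence_Cauchy:
  fixes u :: "nat \<Rightarrow> 'a::real_normed_vector"
  assumes uconvex: "uniformly_convex TYPE('a)" and "convex C" and u: "\<And>n. u n \<in> C"
    and inf: "\<And>c. c \<in> C \<Longrightarrow> d \<le> norm c" and lim: "(\<lambda>n. norm (u n)) \<longlonglongrightarrow> d"
  shows "Cauchy u"
proof (cases "d = 0")
  case True
  then have "u \<longlonglongrightarrow> 0" using lim by (simp add: tendsto_norm_zero_iff)
  then show ?thesis by (rule LIMSEQ_imp_Cauchy)
next
  case False
  have "d \<ge> 0" using lim by (rule LIMSEQ_le_const) simp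
  with False have "d > 0" by simp
  show ?thesis
  proof (rule CauchyI)
    fix e :: real assume "e > 0"
    then obtain \<delta> where "0 < \<delta>" "\<delta> \<le> 1" and \<delta>: "\<forall>R>0. \<forall>a b::'a.
        norm a \<le> R \<and> norm b \<le> R \<and> e / (2 * d) * R \<le> norm (a - b) \<longrightarrow> norm ((a + b) /\<^sub>R 2) \<le> (1 - \<delta>) * R"
      using uniformly_convex_scaled[OF uconvex, of "e / (2 * d)"] \<open>d > 0\<close> by auto
    define R where "R = d * (1 + \<delta>)"
    have "d < R" "e / (2 * d) * R \<le> e"
      using \<open>d > 0\<close> \<open>e > 0\<close> \<open>0 < \<delta>\<close> \<open>\<delta> \<le> 1\<close> by (simp_all add: R_def field_simps)
    have "(1 - \<delta>) * R = d - d * \<delta>\<^sup>2" by (simp add: R_def algebra_simps power2_eq_square)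
    then have "(1 - \<delta>) * R < d" using \<open>d > 0\<close> \<open>0 < \<delta>\<close> by simp
    obtain M where M: "\<And>n. n \<ge> M \<Longrightarrow> norm (u n) < R"
      using order_tendstoD(2)[OF lim \<open>d < R\<close>] by (auto simp: eventually_sequentially)
    have "norm (u m - u n) < e" if "m \<ge> M" "n \<ge> M" for m n
    proof (rule ccontr)
      assume "\<not> norm (u m - u n) < e"
      then have "e / (2 * d) * R \<le> norm (u m - u n)" using \<open>e / (2 * d) * R \<le> e\<close> by linarith
      moreover have "norm (u m) \<le> R" "norm (u n) \<le> R" "R > 0"
        using M[OF that(1)] M[OF that(2)] \<open>d < R\<close> \<open>d > 0\<close> by auto
      ultimately have "norm ((u m + u n) /\<^sub>R 2) \<le> (1 - \<delta>) * R" using \<delta> by blast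
      moreover have "(u m + u n) /\<^sub>R 2 \<in> C"
        using convexD[OF \<open>convex C\<close> u u, of "1/2" "1/2" m n] by (simp add: scaleR_add_right)
      ultimately show False using inf \<open>(1 - \<delta>) * R < d\<close> by fastforce
    qed
    then show "\<exists>M. \<forall>m\<ge>M. \<forall>n\<ge>M. norm (u m - u n) < e" by blast
  qed
qed

lemma uniformly_convex_closed_convex_has_min_norm:
  fixes C :: "'a::banach set"
  assumes uconvex: "uniformly_convex TYPE('a)" and "closed C" "convex C" "C \<noteq> {}"
  shows "\<exists>h\<in>C. \<forall>c\<in>C. norm h \<le> norm c"
proof -
  define d where "d = Inf (norm ` C)"
  have bdd: "bdd_below (norm ` C)" by (rule bdd_belowI[of _ 0]) auto
  have inf: "d \<le> norm c" if "c \<in> C" for c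
    unfolding d_def using bdd that by (auto intro: cInf_lower)
  have "\<exists>c\<in>C. norm c < d + inverse (real (Suc n))" for n
    using cInf_less_iff[OF _ bdd, of "d + inverse (real (Suc n))"] \<open>C \<noteq> {}\<close> by (auto simp: d_def)
  then obtain u where u: "\<And>n. u n \<in> C" and below: "\<And>n. norm (u n) < d + inverse (real (Suc n))"
    by metis
  have lim: "(\<lambda>n. norm (u n)) \<longlonglongrightarrow> d"
  proof (rule tendsto_sandwich[of "\<lambda>_. d" _ _ "\<lambda>n. d + inverse (real (Suc n))"])
    show "\<forall>\<^sub>F n in sequentially. d \<le> norm (u n)" using inf u by simp
    show "\<forall>\<^sub>F n in sequentially. norm (u n) \<le> d + inverse (real (Suc n))" by (intro always_eventually allI less_imp_le below)
    show "(\<lambda>n. d + inverse (real (Suc n))) \<longlonglongrightarrow> d"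
      using tendsto_add[OF tendsto_const LIMSEQ_inverse_real_of_nat, of d] by simp
  qed simp
  have "Cauchy u" by (rule uniformly_convex_minimizing_sequence_Cauchy[OF uconvex \<open>convex C\<close> u inf lim])
  then obtain h where h: "u \<longlonglongrightarrow> h" by (auto simp: Cauchy_convergent_iff convergent_def)
  have "h \<in> C" using closed_sequentially[OF \<open>closed C\<close>] u h by blast
  moreover have "norm h = d" using LIMSEQ_unique[OF tendsto_norm[OF h] lim] .
  ultimately show ?thesis using inf by auto
qed

theorem mainTheorem10:
  fixes x :: "nat \<Rightarrow> 'a::banach" and m :: nat and f0 :: 'a
  assumes "uniform_banach TYPE('a)"
  shows "\<exists>g. (\<forall>i<m. sip g (x i) = 0)
            \<and> (\<exists>c::nat \<Rightarrow> real. dual_map (f0 + g) = (\<lambda>y. \<Sum>i<m. c i * dual_map (x i) y))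
            \<and> norm (f0 + g) \<le> norm f0"
proof -
  have smooth: "uniformly_smooth TYPE('a)" and uconvex: "uniformly_convex TYPE('a)"
    using assms by (auto simp: uniform_banach_def)
  note sip_linear = bounded_linear_sip[OF smooth]
  note sip_lin = bounded_linear.linear[OF sip_linear]
  define C where "C = {h. \<forall>i\<in>{..<m}. sip h (x i) = sip f0 (x i)}"
  have "closed C" "convex C"
    unfolding C_def by (intro closed_convex_bounded_linear_level_set sip_linear)+
  moreover have "f0 \<in> C" by (simp add: C_def)
  ultimately obtain h where "h \<in> C" and min: "\<And>c. c \<in> C \<Longrightarrow> norm h \<le> norm c"
    using uniformly_convex_closed_convex_has_min_norm[OF uconvex] by blast
  have kernel: "\<forall>i<m. sip (h - f0) (x i) = 0"
    using \<open>h \<in> C\<close> by (simp add: C_def linear_diff[OF sip_lin])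
  have "sip z h = 0" if "\<forall>i<m. sip z (x i) = 0" for z
  proof (rule sip_eq_0_at_norm_minimum[OF smooth min])
    show "h + t *\<^sub>R z \<in> C" for t
      using \<open>h \<in> C\<close> that by (simp add: C_def linear_add[OF sip_lin] linear_scale[OF sip_lin])
  qed
  then have "\<exists>c. dual_map h = (\<lambda>y. \<Sum>i<m. c i * dual_map (x i) y)"
    unfolding dual_map_def
    by (intro linear_combination_if_common_kernel_subset sip_lin) auto
  then show ?thesis
    using kernel min[OF \<open>f0 \<in> C\<close>] by (intro exI[of _ "h - f0"]) simp
qed

end
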